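(* Let $N\ge3$, $\alpha\in\mathbb{C}^N$, and fix $1\le i\ne j\le N$. If $u\in\mathcal{S}(\alpha)$, then $L_{i,j}(\alpha)u\in\mathcal{S}(\alpha+e_i-e_j)$. If moreover $(\alpha_i+1)\alpha_j\neq 0$, the linear map $\mathcal{S}(\alpha)\to\mathcal{S}(\alpha+e_i-e_j)$, $u\mapsto L_{i,j}(\alpha)u$, is an isomorphism whose inverse is $v\mapsto \frac{1}{(\alpha_i+1)\alpha_j}L_{j,i}(\alpha+e_i-e_j)v$.
   Context: $x=(x_1,\dots,x_N)$, $\partial_p=\partial/\partial x_p$, $e_p$ the $p$-th standard unit vector of $\mathbb{C}^N$. For $\beta\in\mathbb{C}^N$ and $p\ne q$: $M_{p,q}(\beta)=\partial_p\partial_q+\frac{\beta_q}{x_p-x_q}\partial_p+\frac{\beta_p}{x_q-x_p}\partial_q$ and $L_{p,q}(\beta)=(x_p-x_q)\partial_q+\beta_q$. Let $\Omega'\subset\{x\in\mathbb{C}^N:x_a\ne x_b\ \forall a\ne b\}$ be a simply connected domain; $\mathcal{S}(\beta)$ is the space of holomorphic $u$ on $\Omega'$ with $M_{p,q}(\beta)u=0$ for all $p\ne q$. *)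

theory Defs
  imports "HOL-Analysis.Analysis"
begin

text \<open>Points of C^N are vectors of type complex^'n, with N = CARD('n).
  The p-th standard unit vector is axis p 1.\<close>

definition holo_on :: "(complex^'n \<Rightarrow> complex) \<Rightarrow> (complex^'n) set \<Rightarrow> bool" where
  "holo_on u \<Omega> \<longleftrightarrow> (\<forall>x\<in>\<Omega>. \<exists>D. (u has_derivative D) (at x) \<and>
                         (\<forall>c v. D (c *s v) = c * D v))"

definition pderiv_p :: "'n \<Rightarrow> (complex^'n \<Rightarrow> complex) \<Rightarrow> complex^'n \<Rightarrow> complex" where
  "pderiv_p p u x = deriv (\<lambda>t. u (x + t *s axis p 1)) 0"

definition Mop :: "'n \<Rightarrow> 'n \<Rightarrow> complex^'n \<Rightarrow> (complex^'n \<Rightarrow> complex) \<Rightarrow> complex^'n \<Rightarrow> complex" where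
  "Mop p q \<beta> u x = pderiv_p p (pderiv_p q u) x
     + (\<beta> $ q) / (x $ p - x $ q) * pderiv_p p u x
     + (\<beta> $ p) / (x $ q - x $ p) * pderiv_p q u x"

definition Lop :: "'n \<Rightarrow> 'n \<Rightarrow> complex^'n \<Rightarrow> (complex^'n \<Rightarrow> complex) \<Rightarrow> complex^'n \<Rightarrow> complex" where
  "Lop p q \<beta> u x = (x $ p - x $ q) * pderiv_p q u x + (\<beta> $ q) * u x"

definition Sol :: "(complex^'n) set \<Rightarrow> complex^'n \<Rightarrow> (complex^'n \<Rightarrow> complex) set" where
  "Sol \<Omega> \<beta> = {u. holo_on u \<Omega> \<and> (\<forall>p q. p \<noteq> q \<longrightarrow> (\<forall>x\<in>\<Omega>. Mop p q \<beta> u x = 0))}"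

end

theory Submission
  imports Defs "HOL-Complex_Analysis.Cauchy_Integral_Formula"
begin

(* Restricting a holomorphic u to coordinate lines and using Cauchy's formula for the derivative
   in one variable, one sees that its partial derivatives are again holomorphic and commute.
   For u in S(alpha), clearing the denominator in M_{a,b}(alpha) u = 0 gives
   (x_a - x_b) d_a d_b u = alpha_a d_b u - alpha_b d_a u for all a ~= b, and differentiating this
   identity expresses the third derivatives.  With these relations,
   (x_p - x_q) M_{p,q}(alpha + e_i - e_j) L_{i,j}(alpha) u becomes a polynomial expression that
   vanishes, case by case according to how {p,q} meets {i,j}.  Finally a direct computation gives
   L_{j,i}(alpha + e_i - e_j) L_{i,j}(alpha) u = (alpha_i + 1) alpha_j u on S(alpha); applied once
   as it stands and once with (i, j, alpha) replaced by (j, i, alpha + e_i - e_j), it yields both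
   inverse identities. *)

section \<open>Partial derivatives along coordinate lines\<close>

lemma smult_axis_1 [simp]: "c *s axis p (1::'a::ring_1) = axis p c"
  by (simp add: vec_eq_iff axis_def)

lemma axis_zero [simp]: "axis p 0 = (0::'a::zero^'n)"
  by (simp add: vec_eq_iff axis_def)

lemma norm_axis: "norm (axis p t :: 'a::real_normed_vector^'n) = norm t"
proof -
  have "(\<Sum>i\<in>UNIV. (norm (axis p t $ i))\<^sup>2) = (\<Sum>i\<in>UNIV. if i = p then (norm t)\<^sup>2 else 0)"
    by (rule sum.cong) (auto simp: axis_def)
  then show ?thesis
    by (simp add: norm_vec_def L2_set_def)
qed

lemma bounded_linear_axis: "bounded_linear (axis p :: 'a::real_normed_vector \<Rightarrow> 'a^'n)"
proof (rule bounded_linear_intro[where K = 1])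
  show "axis p (x + y) = axis p x + axis p y" "axis p (r *\<^sub>R x) = r *\<^sub>R axis p x" for x y :: 'a and r
    by (simp_all add: vec_eq_iff axis_def)
  show "norm (axis p x :: 'a^'n) \<le> norm x * 1" for x :: 'a
    by (simp add: norm_axis)
qed

lemma sum_axis_mult: "(\<Sum>p\<in>UNIV. axis q (1::'a::semiring_1) $ p * f p) = f q"
proof -
  have "(\<Sum>p\<in>UNIV. axis q (1::'a) $ p * f p) = (\<Sum>p\<in>UNIV. if p = q then f p else 0)"
    by (rule sum.cong) (auto simp: axis_def)
  then show ?thesis
    by simp
qed

lemma sum_vector_smult_mult:
  fixes c :: "'a::semiring_1"
  shows "(\<Sum>p\<in>UNIV. (c *s v) $ p * f p) = c * (\<Sum>p\<in>UNIV. v $ p * f p)"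
  by (simp add: sum_distrib_left mult.assoc)

lemma pderiv_p_axis: "pderiv_p p u x = deriv (\<lambda>t. u (x + axis p t)) 0"
  by (simp add: pderiv_p_def)

lemma pderiv_p_eqI:
  "((\<lambda>t. f (x + axis p t)) has_field_derivative d) (at 0) \<Longrightarrow> pderiv_p p f x = d"
  unfolding pderiv_p_axis by (rule DERIV_imp_deriv)

lemma has_field_derivative_axis_coordinate:
  "((\<lambda>t. (x + axis p t) $ a) has_field_derivative axis p 1 $ a) (at t0)"
proof -
  have "(\<lambda>t. (x + axis p t) $ a) = (\<lambda>t. x $ a + t * axis p 1 $ a)"
    by (auto simp: axis_def)
  then show ?thesis
    by (auto intro!: derivative_eq_intros)
qed

lemma continuous_on_axis_line:
  fixes x :: "'a::real_normed_vector^'n"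
  shows "continuous_on S (\<lambda>t. x + axis p t)"
  using continuous_on_add[OF continuous_on_const linear_continuous_on[OF bounded_linear_axis]] .

lemma open_axis_line_preimage:
  fixes x :: "'a::real_normed_vector^'n"
  shows "open \<Omega> \<Longrightarrow> open {t. x + axis p t \<in> \<Omega>}"
  using open_vimage[OF _ continuous_on_axis_line] by (simp add: vimage_def)

lemma pderiv_p_cong:
  assumes "open \<Omega>" "x \<in> \<Omega>" "\<And>y. y \<in> \<Omega> \<Longrightarrow> f y = g y"
  shows "pderiv_p p f x = pderiv_p p g x"
  unfolding pderiv_p_axis
proof (rule deriv_cong_ev)
  have "\<forall>\<^sub>F t in nhds 0. t \<in> {t. x + axis p t \<in> \<Omega>}"
    using assms(2) by (intro eventually_nhds_in_open open_axis_line_preimage assms(1)) simp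
  then show "\<forall>\<^sub>F t in nhds 0. f (x + axis p t) = g (x + axis p t)"
    by eventually_elim (use assms(3) in auto)
qed simp

lemma has_field_derivative_axis_line:
  assumes "(u has_derivative D) (at (x + axis q t))" "\<And>c v. D (c *s v) = c * D v"
  shows "((\<lambda>s. u (x + axis q s)) has_field_derivative D (axis q 1)) (at t)"
proof -
  have line: "((\<lambda>s. x + axis q s) has_derivative axis q) (at t)"
    using has_derivative_add[OF has_derivative_const[of x] bounded_linear_imp_has_derivative[OF bounded_linear_axis]]
    by simp
  have "(\<lambda>s. D (axis q s)) = (*) (D (axis q 1))"
  proof
    fix s
    have "D (axis q s) = s * D (axis q 1)"
      using assms(2)[of s "axis q 1"] by (simp only: smult_axis_1)
    then show "D (axis q s) = D (axis q 1) * s"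
      by (simp only: mult.commute)
  qed
  with has_derivative_compose[OF line assms(1)] show ?thesis
    by (simp only: has_field_derivative_def)
qed

lemma holo_on_has_derivative:
  assumes "holo_on u \<Omega>" "x \<in> \<Omega>"
  shows "(u has_derivative (\<lambda>h. \<Sum>q\<in>UNIV. h $ q * pderiv_p q u x)) (at x)"
proof -
  obtain D where D: "(u has_derivative D) (at x)" "\<And>c v. D (c *s v) = c * D v"
    using assms unfolding holo_on_def by blast
  interpret bounded_linear D
    using D(1) by (rule has_derivative_bounded_linear)
  have pderiv_eq: "pderiv_p q u x = D (axis q 1)" for q
  proof (rule pderiv_p_eqI)
    show "((\<lambda>s. u (x + axis q s)) has_field_derivative D (axis q 1)) (at 0)"
      using has_field_derivative_axis_line[of u D x q 0, OF _ D(2)] D(1) by simp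
  qed
  have "D = (\<lambda>h. \<Sum>q\<in>UNIV. h $ q * pderiv_p q u x)"
  proof
    fix h
    have "D h = D (\<Sum>q\<in>UNIV. h $ q *s axis q 1)"
      by (simp only: basis_expansion)
    also have "\<dots> = (\<Sum>q\<in>UNIV. h $ q * pderiv_p q u x)"
      by (simp only: sum D(2) pderiv_eq)
    finally show "D h = (\<Sum>q\<in>UNIV. h $ q * pderiv_p q u x)" .
  qed
  with D(1) show ?thesis
    by simp
qed

lemma holo_on_has_field_derivative_axis_line:
  assumes "holo_on u \<Omega>" "x + axis q t \<in> \<Omega>"
  shows "((\<lambda>s. u (x + axis q s)) has_field_derivative pderiv_p q u (x + axis q t)) (at t)"
  using has_field_derivative_axis_line[OF holo_on_has_derivative[OF assms] sum_vector_smult_mult]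
  by (simp only: sum_axis_mult)

lemma holo_on_has_field_derivative_pderiv_p:
  "holo_on u \<Omega> \<Longrightarrow> x \<in> \<Omega> \<Longrightarrow> ((\<lambda>s. u (x + axis q s)) has_field_derivative pderiv_p q u x) (at 0)"
  using holo_on_has_field_derivative_axis_line[of u \<Omega> x q 0] by simp

lemma holomorphic_on_axis_line:
  "holo_on u \<Omega> \<Longrightarrow> (\<lambda>w. u (y + axis q w)) holomorphic_on {w. y + axis q w \<in> \<Omega>}"
  unfolding holomorphic_on_def field_differentiable_def
  by (auto intro: has_field_derivative_at_within holo_on_has_field_derivative_axis_line)

lemma holo_on_imp_continuous_on: "holo_on u \<Omega> \<Longrightarrow> continuous_on \<Omega> u"
  unfolding holo_on_def
  by (meson continuous_at_imp_continuous_on has_derivative_continuous)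

section \<open>Regularity of holomorphic functions\<close>

lemma dist_axis_line: "dist x (y + axis q w) \<le> dist x y + norm (w :: 'a::real_normed_vector)"
proof -
  have "dist x (y + axis q w) = norm ((x - y) - axis q w)"
    by (simp add: dist_norm algebra_simps)
  also have "\<dots> \<le> dist x y + norm w"
    using norm_triangle_ineq4[of "x - y" "axis q w"] by (simp add: dist_norm norm_axis)
  finally show ?thesis .
qed

lemma pderiv_p_Cauchy_circlepath:
  assumes "holo_on u \<Omega>" "cball y r \<subseteq> \<Omega>" "0 < r"
  shows "((\<lambda>w. u (y + axis q w) / w\<^sup>2) has_contour_integral (2 * pi * \<i> * pderiv_p q u y))
           (circlepath 0 r)"
proof -
  define g where "g w = u (y + axis q w)" for w
  have "y + axis q w \<in> \<Omega>" if "w \<in> cball 0 r" for w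
    using assms(2) dist_axis_line[of y y q w] that by auto
  then have "cball 0 r \<subseteq> {w. y + axis q w \<in> \<Omega>}"
    by blast
  then have hol: "g holomorphic_on cball 0 r"
    unfolding g_def by (rule holomorphic_on_subset[OF holomorphic_on_axis_line[OF assms(1)]])
  have "((\<lambda>w. g w / (w - 0) ^ Suc 1) has_contour_integral (2 * pi * \<i> / fact 1 * (deriv ^^ 1) g 0))
          (circlepath 0 r)"
    using hol assms(3)
    by (intro Cauchy_has_contour_integral_higher_derivative_circlepath holomorphic_on_imp_continuous_on
        holomorphic_on_subset[OF hol ball_subset_cball]) auto
  then show ?thesis
    by (simp add: g_def[abs_def] pderiv_p_axis power2_eq_square)
qed

lemma open_contains_cball_double: "open \<Omega> \<Longrightarrow> x \<in> \<Omega> \<Longrightarrow> \<exists>r>0. cball x (2 * r) \<subseteq> \<Omega>"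
  by (metis open_contains_cball field_sum_of_halves half_gt_zero mult_2)

lemma norm_pderiv_p_diff_le:
  assumes "holo_on u \<Omega>" "cball x r \<subseteq> \<Omega>" "cball y r \<subseteq> \<Omega>" "0 < r"
    and "\<And>w. norm w = r \<Longrightarrow> norm (u (y + axis q w) - u (x + axis q w)) \<le> B"
  shows "norm (pderiv_p q u y - pderiv_p q u x) \<le> B / r"
proof -
  have "norm (complex_of_real r) = r"
    using assms(4) by simp
  from order_trans[OF norm_ge_zero assms(5)[OF this]] have B_nonneg: "0 \<le> B" .
  have "((\<lambda>w. u (y + axis q w) / w\<^sup>2 - u (x + axis q w) / w\<^sup>2) has_contour_integral
          (2 * pi * \<i> * pderiv_p q u y - 2 * pi * \<i> * pderiv_p q u x)) (circlepath 0 r)"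
    using assms(2-4) by (intro has_contour_integral_diff pderiv_p_Cauchy_circlepath[OF assms(1)])
  then have "norm (2 * pi * \<i> * pderiv_p q u y - 2 * pi * \<i> * pderiv_p q u x) \<le> B / r\<^sup>2 * (2 * pi * r)"
  proof (rule has_contour_integral_bound_circlepath)
    fix w :: complex assume w: "norm (w - 0) = r"
    then have "norm (u (y + axis q w) - u (x + axis q w)) / r\<^sup>2 \<le> B / r\<^sup>2"
      by (intro divide_right_mono assms(5)) auto
    with w show "norm (u (y + axis q w) / w\<^sup>2 - u (x + axis q w) / w\<^sup>2) \<le> B / r\<^sup>2"
      by (simp add: norm_divide norm_power flip: diff_divide_distrib)
  qed (use B_nonneg assms(4) in auto)
  then have "2 * pi * norm (pderiv_p q u y - pderiv_p q u x) \<le> B / r\<^sup>2 * (2 * pi * r)"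
    by (simp add: norm_mult flip: right_diff_distrib)
  then show ?thesis
    using assms(4) by (simp add: power2_eq_square field_simps)
qed

lemma continuous_on_pderiv_p:
  assumes "open \<Omega>" "holo_on u \<Omega>"
  shows "continuous_on \<Omega> (pderiv_p q u)"
proof (rule continuous_at_imp_continuous_on, rule ballI)
  fix x assume "x \<in> \<Omega>"
  then obtain r where r: "r > 0" "cball x (2 * r) \<subseteq> \<Omega>"
    using assms(1) open_contains_cball_double by blast
  have "uniformly_continuous_on (cball x (2 * r)) u"
    using continuous_on_subset[OF holo_on_imp_continuous_on[OF assms(2)] r(2)]
    by (intro compact_uniformly_continuous) auto
  show "continuous (at x) (pderiv_p q u)"
    unfolding continuous_at_eps_delta
  proof (intro allI impI)
    fix e :: real assume "e > 0"
    then have "e * r / 2 > 0"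
      using r(1) by simp
    with \<open>uniformly_continuous_on (cball x (2 * r)) u\<close> obtain \<eta> where \<eta>: "\<eta> > 0"
      "\<And>a b. a \<in> cball x (2 * r) \<Longrightarrow> b \<in> cball x (2 * r) \<Longrightarrow> dist b a < \<eta> \<Longrightarrow> dist (u b) (u a) < e * r / 2"
      unfolding uniformly_continuous_on_def by metis
    have "dist (pderiv_p q u y) (pderiv_p q u x) < e" if y: "dist y x < min \<eta> r" for y
    proof -
      have "cball y r \<subseteq> cball x (2 * r)" "cball x r \<subseteq> cball x (2 * r)"
        using r y by (simp_all add: cball_subset_cball_iff)
      moreover have "norm (u (y + axis q w) - u (x + axis q w)) \<le> e * r / 2" if "norm w = r" for w
      proof -
        have "x + axis q w \<in> cball x (2 * r)" "y + axis q w \<in> cball x (2 * r)"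
          using dist_axis_line[of x x q w] dist_axis_line[of x y q w] that y r(1) by (auto simp: dist_commute)
        then show ?thesis
          using \<eta>(2)[of "x + axis q w" "y + axis q w"] y by (simp add: dist_norm)
      qed
      ultimately have "dist (pderiv_p q u y) (pderiv_p q u x) \<le> e * r / 2 / r"
        unfolding dist_norm using r by (intro norm_pderiv_p_diff_le[OF assms(2)]) auto
      then show ?thesis
        using \<open>e > 0\<close> r(1) by simp
    qed
    then show "\<exists>d>0. \<forall>y. dist y x < d \<longrightarrow> dist (pderiv_p q u y) (pderiv_p q u x) < e"
      using \<eta>(1) r(1) by (intro exI[of _ "min \<eta> r"]) auto
  qed
qed

lemma holo_on_linearization_bound:
  fixes u :: "complex^'n \<Rightarrow> complex" and \<epsilon> :: real
  assumes "holo_on u \<Omega>" "closed_segment z (z + h) \<subseteq> \<Omega>"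
    and "\<And>s p. s \<in> closed_segment z (z + h) \<Longrightarrow> norm (pderiv_p p u s - pderiv_p p u z) \<le> \<epsilon>"
  shows "norm (u (z + h) - u z - (\<Sum>p\<in>UNIV. h $ p * pderiv_p p u z)) \<le> norm h * (CARD('n) * \<epsilon>)"
proof -
  define S where "S = closed_segment z (z + h)"
  define D where "D s k = (\<Sum>p\<in>UNIV. k $ p * pderiv_p p u s)" for s k
  have segment: "z + t *\<^sub>R (z + h - z) \<in> S" if "t \<in> {0..1}" for t
  proof -
    have "z + t *\<^sub>R (z + h - z) = (1 - t) *\<^sub>R z + t *\<^sub>R (z + h)"
      by (simp add: algebra_simps)
    with that show ?thesis
      unfolding S_def in_segment(1) by (intro exI[of _ t]) simp
  qed
  have deriv: "(u has_derivative D s) (at s within S)" if "s \<in> S" for s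
    unfolding D_def using that assms(2)
    by (intro has_derivative_at_withinI[OF holo_on_has_derivative[OF assms(1)]]) (auto simp: S_def)
  have bound: "onorm (D s - D z) \<le> CARD('n) * \<epsilon>" if s: "s \<in> S" for s
  proof (rule onorm_le)
    fix k
    have "norm ((D s - D z) k) = norm (\<Sum>p\<in>UNIV. k $ p * (pderiv_p p u s - pderiv_p p u z))"
      by (simp add: D_def algebra_simps sum_subtractf)
    also have "\<dots> \<le> (\<Sum>p\<in>UNIV. norm (k $ p * (pderiv_p p u s - pderiv_p p u z)))"
      by (rule norm_sum)
    also have "\<dots> \<le> of_nat (card (UNIV :: 'n set)) * (norm k * \<epsilon>)"
      unfolding norm_mult
      by (rule sum_bounded_above, rule mult_mono)
        (simp_all add: Finite_Cartesian_Product.norm_nth_le assms(3)[OF s[unfolded S_def]])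
    finally show "norm ((D s - D z) k) \<le> CARD('n) * \<epsilon> * norm k"
      by (simp add: mult_ac)
  qed
  have "z \<in> S"
    by (simp add: S_def)
  from differentiable_bound_linearization[OF segment deriv bound this] show ?thesis
    by (simp add: D_def)
qed

lemma holo_on_uniform_linearization:
  fixes u :: "complex^'n \<Rightarrow> complex"
  assumes "open \<Omega>" "holo_on u \<Omega>" "compact K" "K \<subseteq> \<Omega>" "\<epsilon> > 0"
  obtains \<eta> where "\<eta> > 0" "\<And>z h. closed_segment z (z + h) \<subseteq> K \<Longrightarrow> norm h < \<eta> \<Longrightarrow>
    norm (u (z + h) - u z - (\<Sum>p\<in>UNIV. h $ p * pderiv_p p u z)) \<le> \<epsilon> * norm h"
proof -
  define G where "G s = (\<chi> p. pderiv_p p u s)" for s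
  have "uniformly_continuous_on K G"
    unfolding G_def using continuous_on_subset[OF continuous_on_pderiv_p[OF assms(1,2)] assms(4)]
    by (intro compact_uniformly_continuous continuous_on_vec_lambda assms(3)) auto
  moreover have "\<epsilon> / CARD('n) > 0"
    using assms(5) by simp
  ultimately obtain \<eta> where \<eta>: "\<eta> > 0"
    "\<And>a b. a \<in> K \<Longrightarrow> b \<in> K \<Longrightarrow> dist b a < \<eta> \<Longrightarrow> dist (G b) (G a) < \<epsilon> / CARD('n)"
    unfolding uniformly_continuous_on_def by metis
  have "norm (u (z + h) - u z - (\<Sum>p\<in>UNIV. h $ p * pderiv_p p u z)) \<le> \<epsilon> * norm h"
    if K: "closed_segment z (z + h) \<subseteq> K" and h: "norm h < \<eta>" for z h
  proof -
    have "norm (pderiv_p p u s - pderiv_p p u z) \<le> \<epsilon> / CARD('n)" if s: "s \<in> closed_segment z (z + h)" for s p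
    proof -
      have "dist s z < \<eta>"
        using segment_bound(1)[OF s] h by (simp add: dist_norm)
      then have "dist (G s) (G z) < \<epsilon> / CARD('n)"
        using \<eta>(2) K s by blast
      then show ?thesis
        using Finite_Cartesian_Product.norm_nth_le[of "G s - G z" p] by (simp add: G_def dist_norm)
    qed
    from holo_on_linearization_bound[OF assms(2) order_trans[OF K assms(4)] this]
    show ?thesis
      by (simp add: mult.commute)
  qed
  with \<eta>(1) show ?thesis
    using that by blast
qed

lemma contour_integrable_axis_circlepath:
  assumes "continuous_on \<Omega> f" "cball x r \<subseteq> \<Omega>" "0 < r"
  shows "(\<lambda>w. f (x + axis q w) / w\<^sup>2) contour_integrable_on circlepath 0 r"
proof (rule contour_integrable_continuous_circlepath)
  have "(\<lambda>w. x + axis q w) ` sphere 0 r \<subseteq> \<Omega>"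
    using assms(2) dist_axis_line[of x x q] by fastforce
  then have "continuous_on (sphere 0 r) (\<lambda>w. f (x + axis q w))"
    by (intro continuous_on_compose2[OF assms(1) continuous_on_axis_line])
  then show "continuous_on (path_image (circlepath 0 r)) (\<lambda>w. f (x + axis q w) / w\<^sup>2)"
    using assms(3) by (auto intro!: continuous_intros)
qed

lemma has_contour_integral_pderiv_p_remainder:
  assumes "open \<Omega>" "holo_on u \<Omega>" "cball x r \<subseteq> \<Omega>" "cball y r \<subseteq> \<Omega>" "0 < r"
  shows "((\<lambda>w. (u (y + axis q w) - u (x + axis q w) - (\<Sum>p\<in>UNIV. (y - x) $ p * pderiv_p p u (x + axis q w))) / w\<^sup>2)
          has_contour_integral (2 * pi * \<i> * pderiv_p q u y - 2 * pi * \<i> * pderiv_p q u x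
            - (\<Sum>p\<in>UNIV. (y - x) $ p * contour_integral (circlepath 0 r) (\<lambda>w. pderiv_p p u (x + axis q w) / w\<^sup>2))))
         (circlepath 0 r)"
proof (rule has_contour_integral_eq)
  show "((\<lambda>w. u (y + axis q w) / w\<^sup>2 - u (x + axis q w) / w\<^sup>2
           - (\<Sum>p\<in>UNIV. (y - x) $ p * (pderiv_p p u (x + axis q w) / w\<^sup>2))) has_contour_integral
        (2 * pi * \<i> * pderiv_p q u y - 2 * pi * \<i> * pderiv_p q u x
          - (\<Sum>p\<in>UNIV. (y - x) $ p * contour_integral (circlepath 0 r) (\<lambda>w. pderiv_p p u (x + axis q w) / w\<^sup>2))))
        (circlepath 0 r)"
    using assms(3-5)
    by (intro has_contour_integral_diff pderiv_p_Cauchy_circlepath[OF assms(2)] has_contour_integral_sum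
        has_contour_integral_lmul has_contour_integral_integral
        contour_integrable_axis_circlepath[OF continuous_on_pderiv_p[OF assms(1,2)]]) auto
qed (simp add: diff_divide_distrib sum_divide_distrib)

lemma norm_pderiv_p_remainder_le:
  assumes "open \<Omega>" "holo_on u \<Omega>" "cball x r \<subseteq> \<Omega>" "cball y r \<subseteq> \<Omega>" "0 < r"
    and "\<And>w. norm w = r \<Longrightarrow>
      norm (u (y + axis q w) - u (x + axis q w) - (\<Sum>p\<in>UNIV. (y - x) $ p * pderiv_p p u (x + axis q w))) \<le> M"
  shows "norm (pderiv_p q u y - pderiv_p q u x - (\<Sum>p\<in>UNIV. (y - x) $ p *
           (contour_integral (circlepath 0 r) (\<lambda>w. pderiv_p p u (x + axis q w) / w\<^sup>2) / (2 * pi * \<i>)))) \<le> M / r"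
proof -
  define c where "c p = contour_integral (circlepath 0 r) (\<lambda>w. pderiv_p p u (x + axis q w) / w\<^sup>2)" for p
  have "norm (complex_of_real r) = r"
    using assms(5) by simp
  from order_trans[OF norm_ge_zero assms(6)[OF this]] have M_nonneg: "0 \<le> M" .
  from has_contour_integral_pderiv_p_remainder[OF assms(1-5), of q]
  have bound: "norm (2 * pi * \<i> * pderiv_p q u y - 2 * pi * \<i> * pderiv_p q u x - (\<Sum>p\<in>UNIV. (y - x) $ p * c p))
          \<le> M / r\<^sup>2 * (2 * pi * r)"
    unfolding c_def
  proof (rule has_contour_integral_bound_circlepath)
    fix w :: complex assume w: "norm (w - 0) = r"
    then have "norm (u (y + axis q w) - u (x + axis q w) - (\<Sum>p\<in>UNIV. (y - x) $ p * pderiv_p p u (x + axis q w)))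
        / r\<^sup>2 \<le> M / r\<^sup>2"
      by (intro divide_right_mono assms(6)) auto
    with w show "norm ((u (y + axis q w) - u (x + axis q w)
        - (\<Sum>p\<in>UNIV. (y - x) $ p * pderiv_p p u (x + axis q w))) / w\<^sup>2) \<le> M / r\<^sup>2"
      by (simp add: norm_divide norm_power)
  qed (use M_nonneg assms(5) in auto)
  have "2 * pi * \<i> * pderiv_p q u y - 2 * pi * \<i> * pderiv_p q u x - (\<Sum>p\<in>UNIV. (y - x) $ p * c p)
      = 2 * pi * \<i> * (pderiv_p q u y - pderiv_p q u x - (\<Sum>p\<in>UNIV. (y - x) $ p * (c p / (2 * pi * \<i>))))"
    by (simp add: right_diff_distrib sum_distrib_left)
  then have "2 * pi * norm (pderiv_p q u y - pderiv_p q u x - (\<Sum>p\<in>UNIV. (y - x) $ p * (c p / (2 * pi * \<i>))))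
      = norm (2 * pi * \<i> * pderiv_p q u y - 2 * pi * \<i> * pderiv_p q u x - (\<Sum>p\<in>UNIV. (y - x) $ p * c p))"
    by (simp only: norm_mult) simp
  also have "\<dots> \<le> M / r\<^sup>2 * (2 * pi * r)"
    by (fact bound)
  also have "\<dots> = 2 * pi * (M / r)"
    using assms(5) by (simp add: power2_eq_square)
  finally show ?thesis
    unfolding c_def by (rule mult_left_le_imp_le) simp
qed

lemma has_derivative_pderiv_p:
  fixes u :: "complex^'n \<Rightarrow> complex"
  assumes "open \<Omega>" "holo_on u \<Omega>" "cball x (2 * r) \<subseteq> \<Omega>" "0 < r"
  shows "(pderiv_p q u has_derivative (\<lambda>h. \<Sum>p\<in>UNIV. h $ p *
           (contour_integral (circlepath 0 r) (\<lambda>w. pderiv_p p u (x + axis q w) / w\<^sup>2) / (2 * pi * \<i>))))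
         (at x)"
  unfolding has_derivative_at_alt
proof (intro conjI allI impI)
  show "bounded_linear (\<lambda>h. \<Sum>p\<in>UNIV. h $ p *
           (contour_integral (circlepath 0 r) (\<lambda>w. pderiv_p p u (x + axis q w) / w\<^sup>2) / (2 * pi * \<i>)))"
    by (intro bounded_linear_sum bounded_linear_compose[OF bounded_linear_mult_left bounded_linear_vec_nth])
  fix e :: real assume "e > 0"
  then obtain \<eta> where \<eta>: "\<eta> > 0" "\<And>z h. closed_segment z (z + h) \<subseteq> cball x (2 * r) \<Longrightarrow> norm h < \<eta> \<Longrightarrow>
      norm (u (z + h) - u z - (\<Sum>p\<in>UNIV. h $ p * pderiv_p p u z)) \<le> e * r * norm h"
    using holo_on_uniform_linearization[OF assms(1,2) compact_cball assms(3), of "e * r"] assms(4) by auto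
  have "norm (pderiv_p q u y - pderiv_p q u x - (\<Sum>p\<in>UNIV. (y - x) $ p *
           (contour_integral (circlepath 0 r) (\<lambda>w. pderiv_p p u (x + axis q w) / w\<^sup>2) / (2 * pi * \<i>))))
         \<le> e * r * norm (y - x) / r"
    if y: "norm (y - x) < min \<eta> r" for y
  proof (rule norm_pderiv_p_remainder_le[OF assms(1,2)])
    show "cball x r \<subseteq> \<Omega>" "cball y r \<subseteq> \<Omega>"
      using y assms(3,4) subset_cball[of r "2 * r" x] cball_subset_cball_iff[of y r x "2 * r"]
      by (auto simp: dist_norm norm_minus_commute)
    fix w :: complex assume w: "norm w = r"
    define z where "z = x + axis q w"
    have "z \<in> cball x (2 * r)" "z + (y - x) \<in> cball x (2 * r)"
      using dist_axis_line[of x x q w] dist_axis_line[of x y q w] w y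
      by (auto simp: z_def dist_norm norm_minus_commute norm_axis algebra_simps)
    then have "closed_segment z (z + (y - x)) \<subseteq> cball x (2 * r)"
      by (intro closed_segment_subset convex_cball)
    with y have bound: "norm (u (z + (y - x)) - u z - (\<Sum>p\<in>UNIV. (y - x) $ p * pderiv_p p u z))
        \<le> e * r * norm (y - x)"
      by (intro \<eta>(2)) auto
    have "z + (y - x) = y + axis q w"
      by (simp add: z_def algebra_simps)
    from bound[unfolded this] show "norm (u (y + axis q w) - u (x + axis q w)
        - (\<Sum>p\<in>UNIV. (y - x) $ p * pderiv_p p u (x + axis q w))) \<le> e * r * norm (y - x)"
      by (simp only: z_def)
  qed (use assms(4) in simp)
  with \<eta>(1) assms(4) show "\<exists>d>0. \<forall>y. norm (y - x) < d \<longrightarrow> norm (pderiv_p q u y - pderiv_p q u x - (\<Sum>p\<in>UNIV. (y - x) $ p *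
           (contour_integral (circlepath 0 r) (\<lambda>w. pderiv_p p u (x + axis q w) / w\<^sup>2) / (2 * pi * \<i>))))
         \<le> e * norm (y - x)"
    by (intro exI[of _ "min \<eta> r"]) auto
qed

lemma holo_on_pderiv_p:
  assumes "open \<Omega>" "holo_on u \<Omega>"
  shows "holo_on (pderiv_p q u) \<Omega>"
  unfolding holo_on_def
proof
  fix x assume "x \<in> \<Omega>"
  then obtain r where r: "r > 0" "cball x (2 * r) \<subseteq> \<Omega>"
    using assms(1) open_contains_cball_double by blast
  define C where "C p = contour_integral (circlepath 0 r) (\<lambda>w. pderiv_p p u (x + axis q w) / w\<^sup>2) / (2 * pi * \<i>)" for p
  have "(pderiv_p q u has_derivative (\<lambda>h. \<Sum>p\<in>UNIV. h $ p * C p)) (at x)"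
    unfolding C_def by (rule has_derivative_pderiv_p[OF assms r(2,1)])
  moreover have "(\<Sum>p\<in>UNIV. (c *s v) $ p * C p) = c * (\<Sum>p\<in>UNIV. v $ p * C p)" for c v
    by (rule sum_vector_smult_mult)
  ultimately show "\<exists>D. (pderiv_p q u has_derivative D) (at x) \<and> (\<forall>c v. D (c *s v) = c * D v)"
    by blast
qed

lemma pderiv_p_commute:
  assumes "open \<Omega>" "holo_on u \<Omega>" "x \<in> \<Omega>"
  shows "pderiv_p p (pderiv_p q u) x = pderiv_p q (pderiv_p p u) x"
proof -
  obtain r where r: "r > 0" "cball x (2 * r) \<subseteq> \<Omega>"
    using open_contains_cball_double[OF assms(1,3)] by blast
  define C where "C p = contour_integral (circlepath 0 r) (\<lambda>w. pderiv_p p u (x + axis q w) / w\<^sup>2)" for p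
  have "(\<lambda>h. \<Sum>p\<in>UNIV. h $ p * (C p / (2 * pi * \<i>))) = (\<lambda>h. \<Sum>p\<in>UNIV. h $ p * pderiv_p p (pderiv_p q u) x)"
    using has_derivative_pderiv_p[OF assms(1,2) r(2,1)]
      holo_on_has_derivative[OF holo_on_pderiv_p[OF assms(1,2)] assms(3)]
    unfolding C_def by (rule has_derivative_unique)
  from fun_cong[OF this, of "axis p 1"]
  have "pderiv_p p (pderiv_p q u) x = C p / (2 * pi * \<i>)"
    by (simp only: sum_axis_mult)
  moreover have "cball x r \<subseteq> \<Omega>"
    using r subset_cball[of r "2 * r" x] by auto
  then have "C p = 2 * pi * \<i> * pderiv_p q (pderiv_p p u) x"
    unfolding C_def
    by (intro contour_integral_unique pderiv_p_Cauchy_circlepath[OF holo_on_pderiv_p[OF assms(1,2)]] r(1))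
  ultimately show ?thesis
    by simp
qed

section \<open>The operators M and L on solutions\<close>

lemma pderiv_p_cmult:
  "holo_on f \<Omega> \<Longrightarrow> x \<in> \<Omega> \<Longrightarrow> pderiv_p p (\<lambda>y. c * f y) x = c * pderiv_p p f x"
  by (intro pderiv_p_eqI DERIV_cmult holo_on_has_field_derivative_pderiv_p)

lemma holo_on_cmult:
  assumes "holo_on f \<Omega>"
  shows "holo_on (\<lambda>y. c * f y) \<Omega>"
  unfolding holo_on_def
proof
  fix x assume "x \<in> \<Omega>"
  then obtain D where D: "(f has_derivative D) (at x)" "\<And>a v. D (a *s v) = a * D v"
    using assms unfolding holo_on_def by blast
  have "((\<lambda>y. c * f y) has_derivative (\<lambda>h. c * D h)) (at x)"
    using has_derivative_mult[OF has_derivative_const[of c] D(1)] by simp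
  moreover have "c * D (a *s v) = a * (c * D v)" for a v
    by (simp add: D(2) mult.left_commute)
  ultimately show "\<exists>D. ((\<lambda>y. c * f y) has_derivative D) (at x) \<and> (\<forall>a v. D (a *s v) = a * D v)"
    by blast
qed

lemma holo_on_Lop:
  assumes "open \<Omega>" "holo_on u \<Omega>"
  shows "holo_on (Lop i j \<beta> u) \<Omega>"
  unfolding holo_on_def
proof
  fix x assume x: "x \<in> \<Omega>"
  have coordinate: "((\<lambda>y. y $ k) has_derivative (\<lambda>h. h $ k)) (at x)" for k
    by (rule bounded_linear_imp_has_derivative[OF bounded_linear_vec_nth])
  have "Lop i j \<beta> u = (\<lambda>y. (y $ i - y $ j) * pderiv_p j u y + \<beta> $ j * u y)"
    by (simp add: Lop_def fun_eq_iff)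
  with has_derivative_add[OF
      has_derivative_mult[OF has_derivative_diff[OF coordinate coordinate]
        holo_on_has_derivative[OF holo_on_pderiv_p[OF assms] x]]
      has_derivative_mult[OF has_derivative_const holo_on_has_derivative[OF assms(2) x]]]
  have "(Lop i j \<beta> u has_derivative (\<lambda>h. (x $ i - x $ j) * (\<Sum>p\<in>UNIV. h $ p * pderiv_p p (pderiv_p j u) x)
          + (h $ i - h $ j) * pderiv_p j u x + (\<beta> $ j * (\<Sum>p\<in>UNIV. h $ p * pderiv_p p u x) + 0 * u x))) (at x)"
    by simp
  moreover have "(x $ i - x $ j) * (\<Sum>p\<in>UNIV. (a *s v) $ p * pderiv_p p (pderiv_p j u) x)
          + ((a *s v) $ i - (a *s v) $ j) * pderiv_p j u x
          + (\<beta> $ j * (\<Sum>p\<in>UNIV. (a *s v) $ p * pderiv_p p u x) + 0 * u x)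
        = a * ((x $ i - x $ j) * (\<Sum>p\<in>UNIV. v $ p * pderiv_p p (pderiv_p j u) x)
          + (v $ i - v $ j) * pderiv_p j u x + (\<beta> $ j * (\<Sum>p\<in>UNIV. v $ p * pderiv_p p u x) + 0 * u x))"
    for a v by (simp add: sum_distrib_left algebra_simps)
  ultimately show "\<exists>D. (Lop i j \<beta> u has_derivative D) (at x) \<and> (\<forall>a v. D (a *s v) = a * D v)"
    by blast
qed

lemma pderiv_p_Lop:
  assumes "open \<Omega>" "holo_on u \<Omega>" "x \<in> \<Omega>"
  shows "pderiv_p q (Lop i j \<beta> u) x = (axis q 1 $ i - axis q 1 $ j) * pderiv_p j u x
           + (x $ i - x $ j) * pderiv_p q (pderiv_p j u) x + \<beta> $ j * pderiv_p q u x"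
  unfolding Lop_def
  by (rule pderiv_p_eqI, (rule derivative_eq_intros has_field_derivative_axis_coordinate
      holo_on_has_field_derivative_pderiv_p[OF assms(2,3)]
      holo_on_has_field_derivative_pderiv_p[OF holo_on_pderiv_p[OF assms(1,2)] assms(3)] refl)+) simp

lemma pderiv_p_pderiv_p_Lop:
  assumes "open \<Omega>" "holo_on u \<Omega>" "x \<in> \<Omega>"
  shows "pderiv_p p (pderiv_p q (Lop i j \<beta> u)) x =
           (axis q 1 $ i - axis q 1 $ j) * pderiv_p p (pderiv_p j u) x
         + (axis p 1 $ i - axis p 1 $ j) * pderiv_p q (pderiv_p j u) x
         + (x $ i - x $ j) * pderiv_p p (pderiv_p q (pderiv_p j u)) x + \<beta> $ j * pderiv_p p (pderiv_p q u) x"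
proof -
  have hj: "holo_on (pderiv_p j u) \<Omega>" and hqj: "holo_on (pderiv_p q (pderiv_p j u)) \<Omega>"
    and hq: "holo_on (pderiv_p q u) \<Omega>"
    using assms(1,2) by (auto intro: holo_on_pderiv_p)
  have "pderiv_p p (pderiv_p q (Lop i j \<beta> u)) x = pderiv_p p (\<lambda>y. (axis q 1 $ i - axis q 1 $ j) * pderiv_p j u y
          + (y $ i - y $ j) * pderiv_p q (pderiv_p j u) y + \<beta> $ j * pderiv_p q u y) x"
    by (rule pderiv_p_cong[OF assms(1,3)]) (rule pderiv_p_Lop[OF assms(1,2)])
  also have "\<dots> = (axis q 1 $ i - axis q 1 $ j) * pderiv_p p (pderiv_p j u) x
         + (axis p 1 $ i - axis p 1 $ j) * pderiv_p q (pderiv_p j u) x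
         + (x $ i - x $ j) * pderiv_p p (pderiv_p q (pderiv_p j u)) x + \<beta> $ j * pderiv_p p (pderiv_p q u) x"
    by (rule pderiv_p_eqI, (rule derivative_eq_intros has_field_derivative_axis_coordinate
        holo_on_has_field_derivative_pderiv_p[OF hj assms(3)] holo_on_has_field_derivative_pderiv_p[OF hqj assms(3)]
        holo_on_has_field_derivative_pderiv_p[OF hq assms(3)] refl)+) (simp add: algebra_simps)
  finally show ?thesis .
qed

lemma mult_Mop_eq:
  assumes "x $ p \<noteq> x $ q"
  shows "(x $ p - x $ q) * Mop p q \<beta> w x = (x $ p - x $ q) * pderiv_p p (pderiv_p q w) x
           + \<beta> $ q * pderiv_p p w x - \<beta> $ p * pderiv_p q w x"
proof -
  have clear: "d * (X + b / d * P + b' / (- d) * Q) = d * X + b * P - b' * Q" if "d \<noteq> 0"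
    for d X b b' P Q :: complex
    using that by (simp add: field_simps)
  have "x $ q - x $ p = - (x $ p - x $ q)"
    by simp
  then show ?thesis
    unfolding Mop_def using assms by (simp only:) (rule clear, simp)
qed

lemma Sol_second_derivative_relation:
  assumes "u \<in> Sol \<Omega> \<beta>" "a \<noteq> b" "x \<in> \<Omega>" "x $ a \<noteq> x $ b"
  shows "(x $ a - x $ b) * pderiv_p a (pderiv_p b u) x = \<beta> $ a * pderiv_p b u x - \<beta> $ b * pderiv_p a u x"
proof -
  have "Mop a b \<beta> u x = 0"
    using assms(1-3) by (simp add: Sol_def)
  with mult_Mop_eq[OF assms(4), of \<beta> u] show ?thesis
    by (simp add: algebra_simps)
qed

lemma Sol_third_derivative_relation:
  assumes "open \<Omega>" "\<Omega> \<subseteq> {x. \<forall>a b. a \<noteq> b \<longrightarrow> x $ a \<noteq> x $ b}" "u \<in> Sol \<Omega> \<beta>" "a \<noteq> b" "x \<in> \<Omega>"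
  shows "(axis c 1 $ a - axis c 1 $ b) * pderiv_p a (pderiv_p b u) x
           + (x $ a - x $ b) * pderiv_p c (pderiv_p a (pderiv_p b u)) x
         = \<beta> $ a * pderiv_p c (pderiv_p b u) x - \<beta> $ b * pderiv_p c (pderiv_p a u) x"
proof -
  have hu: "holo_on u \<Omega>"
    using assms(3) by (simp add: Sol_def)
  have ha: "holo_on (pderiv_p a u) \<Omega>" and hb: "holo_on (pderiv_p b u) \<Omega>"
    and hab: "holo_on (pderiv_p a (pderiv_p b u)) \<Omega>"
    using assms(1) hu by (auto intro: holo_on_pderiv_p)
  have "pderiv_p c (\<lambda>y. (y $ a - y $ b) * pderiv_p a (pderiv_p b u) y) x
      = pderiv_p c (\<lambda>y. \<beta> $ a * pderiv_p b u y - \<beta> $ b * pderiv_p a u y) x"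
    using assms(2-4) by (intro pderiv_p_cong[OF assms(1,5)] Sol_second_derivative_relation) auto
  moreover have "pderiv_p c (\<lambda>y. (y $ a - y $ b) * pderiv_p a (pderiv_p b u) y) x
      = (axis c 1 $ a - axis c 1 $ b) * pderiv_p a (pderiv_p b u) x
        + (x $ a - x $ b) * pderiv_p c (pderiv_p a (pderiv_p b u)) x"
    by (rule pderiv_p_eqI, (rule derivative_eq_intros has_field_derivative_axis_coordinate
        holo_on_has_field_derivative_pderiv_p[OF hab assms(5)] refl)+) simp
  moreover have "pderiv_p c (\<lambda>y. \<beta> $ a * pderiv_p b u y - \<beta> $ b * pderiv_p a u y) x
      = \<beta> $ a * pderiv_p c (pderiv_p b u) x - \<beta> $ b * pderiv_p c (pderiv_p a u) x"
    by (rule pderiv_p_eqI, (rule derivative_eq_intros holo_on_has_field_derivative_pderiv_p[OF ha assms(5)]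
        holo_on_has_field_derivative_pderiv_p[OF hb assms(5)] refl)+) simp
  ultimately show ?thesis
    by simp
qed

lemma pderiv_p_rotate:
  assumes "open \<Omega>" "holo_on u \<Omega>" "x \<in> \<Omega>"
  shows "pderiv_p a (pderiv_p b (pderiv_p c u)) x = pderiv_p c (pderiv_p a (pderiv_p b u)) x"
proof -
  have "pderiv_p a (pderiv_p b (pderiv_p c u)) x = pderiv_p a (pderiv_p c (pderiv_p b u)) x"
    by (intro pderiv_p_cong[OF assms(1,3)] pderiv_p_commute[OF assms(1,2)])
  also have "\<dots> = pderiv_p c (pderiv_p a (pderiv_p b u)) x"
    by (intro pderiv_p_commute[OF assms(1) holo_on_pderiv_p[OF assms(1,2)] assms(3)])
  finally show ?thesis .
qed

(* The variables stand for values at a point x: d a = d_a u, s a b = d_a d_b u, t = d_p d_q d_j u,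
   e k = d_k (x_i - x_j) and c = d_j (x_p - x_q); rel_deriv is the third-derivative relation
   for the pair (p, q). *)
lemma Mop_Lop_algebraic_identity:
  fixes x \<alpha> d e :: "'n \<Rightarrow> 'a::field" and s :: "'n \<Rightarrow> 'n \<Rightarrow> 'a" and c t :: 'a
  assumes "i \<noteq> j" "p \<noteq> q"
    and e: "\<And>k. e k = of_bool (k = i) - of_bool (k = j)"
    and c: "c = of_bool (p = j) - of_bool (q = j)"
    and s_sym: "\<And>a b. s a b = s b a"
    and rel: "\<And>a b. a \<noteq> b \<Longrightarrow> (x a - x b) * s a b = \<alpha> a * d b - \<alpha> b * d a"
    and rel_deriv: "c * s p q + (x p - x q) * t = \<alpha> p * s j q - \<alpha> q * s j p"
  shows "(x p - x q) * (e q * s p j + e p * s q j + (x i - x j) * t + \<alpha> j * s p q)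
       + (\<alpha> q + e q) * (e p * d j + (x i - x j) * s p j + \<alpha> j * d p)
       - (\<alpha> p + e p) * (e q * d j + (x i - x j) * s q j + \<alpha> j * d q) = 0"
proof -
  have "(x p - x q) * (e q * s p j + e p * s q j + (x i - x j) * t + \<alpha> j * s p q)
       + (\<alpha> q + e q) * (e p * d j + (x i - x j) * s p j + \<alpha> j * d p)
       - (\<alpha> p + e p) * (e q * d j + (x i - x j) * s q j + \<alpha> j * d q)
     = e q * ((x p - x q + x i - x j) * s p j + \<alpha> j * d p - \<alpha> p * d j)
       + e p * ((x p - x q - x i + x j) * s q j - \<alpha> j * d q + \<alpha> q * d j)
       - (x i - x j) * c * s p q
       + \<alpha> j * ((x p - x q) * s p q - (\<alpha> p * d q - \<alpha> q * d p))"
    using rel_deriv s_sym[of j p] s_sym[of j q] by algebra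
  also have "\<dots> = 0"
  proof -
    have "(x p - x q) * s p q - (\<alpha> p * d q - \<alpha> q * d p) = 0"
      using rel[OF \<open>p \<noteq> q\<close>] by simp
    moreover have "(x p - x j) * s p j = \<alpha> p * d j - \<alpha> j * d p" if "p \<noteq> j"
      using rel[OF that] .
    moreover have "(x q - x j) * s q j = \<alpha> q * d j - \<alpha> j * d q" if "q \<noteq> j"
      using rel[OF that] .
    ultimately show ?thesis
      using \<open>i \<noteq> j\<close> \<open>p \<noteq> q\<close> unfolding c e
      by (cases "p = i"; cases "p = j"; cases "q = i"; cases "q = j") (simp_all add: algebra_simps s_sym)
  qed
  finally show ?thesis .
qed

lemma mult_Mop_Lop:
  fixes i j
  assumes "open \<Omega>" "holo_on u \<Omega>" "x \<in> \<Omega>" "x $ p \<noteq> x $ q"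
  defines "e k \<equiv> axis k 1 $ i - axis k 1 $ j"
  shows "(x $ p - x $ q) * Mop p q (\<alpha> + axis i 1 - axis j 1) (Lop i j \<alpha> u) x =
      (x $ p - x $ q) * (e q * pderiv_p p (pderiv_p j u) x + e p * pderiv_p q (pderiv_p j u) x
        + (x $ i - x $ j) * pderiv_p p (pderiv_p q (pderiv_p j u)) x + \<alpha> $ j * pderiv_p p (pderiv_p q u) x)
    + (\<alpha> $ q + e q) * (e p * pderiv_p j u x + (x $ i - x $ j) * pderiv_p p (pderiv_p j u) x + \<alpha> $ j * pderiv_p p u x)
    - (\<alpha> $ p + e p) * (e q * pderiv_p j u x + (x $ i - x $ j) * pderiv_p q (pderiv_p j u) x + \<alpha> $ j * pderiv_p q u x)"
proof -
  have "(\<alpha> + axis i 1 - axis j 1) $ k = \<alpha> $ k + e k" for k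
    by (simp add: e_def axis_def)
  then show ?thesis
    unfolding mult_Mop_eq[OF assms(4)] e_def pderiv_p_Lop[OF assms(1-3)] pderiv_p_pderiv_p_Lop[OF assms(1-3)]
    by (simp only: e_def)
qed

lemma Lop_in_Sol:
  assumes "open \<Omega>" "\<Omega> \<subseteq> {x. \<forall>a b. a \<noteq> b \<longrightarrow> x $ a \<noteq> x $ b}" "i \<noteq> j" "u \<in> Sol \<Omega> \<alpha>"
  shows "Lop i j \<alpha> u \<in> Sol \<Omega> (\<alpha> + axis i 1 - axis j 1)"
proof -
  have hu: "holo_on u \<Omega>"
    using assms(4) by (simp add: Sol_def)
  have "Mop p q (\<alpha> + axis i 1 - axis j 1) (Lop i j \<alpha> u) x = 0" if "p \<noteq> q" "x \<in> \<Omega>" for p q x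
  proof -
    have distinct: "x $ a \<noteq> x $ b" if "a \<noteq> b" for a b
      using assms(2) \<open>x \<in> \<Omega>\<close> that by blast
    have "(x $ p - x $ q) * Mop p q (\<alpha> + axis i 1 - axis j 1) (Lop i j \<alpha> u) x = 0"
      unfolding mult_Mop_Lop[OF assms(1) hu \<open>x \<in> \<Omega>\<close> distinct[OF \<open>p \<noteq> q\<close>]]
    proof (rule Mop_Lop_algebraic_identity[where x = "($) x" and \<alpha> = "($) \<alpha>" and d = "\<lambda>k. pderiv_p k u x"
          and s = "\<lambda>a b. pderiv_p a (pderiv_p b u) x" and c = "axis j 1 $ p - axis j 1 $ q"])
      show "i \<noteq> j" "p \<noteq> q"
        by fact+
      show "axis k 1 $ i - axis k 1 $ j = (of_bool (k = i) - of_bool (k = j) :: complex)" for k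
        by (simp add: axis_def)
      show "axis j 1 $ p - axis j 1 $ q = (of_bool (p = j) - of_bool (q = j) :: complex)"
        by (simp add: axis_def)
      show "pderiv_p a (pderiv_p b u) x = pderiv_p b (pderiv_p a u) x" for a b
        by (rule pderiv_p_commute[OF assms(1) hu \<open>x \<in> \<Omega>\<close>])
      show "(x $ a - x $ b) * pderiv_p a (pderiv_p b u) x = \<alpha> $ a * pderiv_p b u x - \<alpha> $ b * pderiv_p a u x"
        if "a \<noteq> b" for a b
        by (rule Sol_second_derivative_relation[OF assms(4) that \<open>x \<in> \<Omega>\<close> distinct[OF that]])
      show "(axis j 1 $ p - axis j 1 $ q) * pderiv_p p (pderiv_p q u) x
          + (x $ p - x $ q) * pderiv_p p (pderiv_p q (pderiv_p j u)) x
          = \<alpha> $ p * pderiv_p j (pderiv_p q u) x - \<alpha> $ q * pderiv_p j (pderiv_p p u) x"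
        unfolding pderiv_p_rotate[OF assms(1) hu \<open>x \<in> \<Omega>\<close>, of p q j]
        by (rule Sol_third_derivative_relation[OF assms(1,2,4) \<open>p \<noteq> q\<close> \<open>x \<in> \<Omega>\<close>])
    qed
    then show ?thesis
      using distinct[OF \<open>p \<noteq> q\<close>] by (metis mult_eq_0_iff right_minus_eq)
  qed
  with holo_on_Lop[OF assms(1) hu] show ?thesis
    unfolding Sol_def by simp
qed

lemma Sol_cmult:
  assumes "open \<Omega>" "w \<in> Sol \<Omega> \<beta>"
  shows "(\<lambda>y. c * w y) \<in> Sol \<Omega> \<beta>"
proof -
  have hw: "holo_on w \<Omega>"
    using assms(2) by (simp add: Sol_def)
  have "Mop p q \<beta> (\<lambda>y. c * w y) x = c * Mop p q \<beta> w x" if "x \<in> \<Omega>" for p q x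
  proof -
    have "pderiv_p p (pderiv_p q (\<lambda>y. c * w y)) x = pderiv_p p (\<lambda>y. c * pderiv_p q w y) x"
      by (intro pderiv_p_cong[OF assms(1) that] pderiv_p_cmult[OF hw])
    also have "\<dots> = c * pderiv_p p (pderiv_p q w) x"
      by (intro pderiv_p_cmult[OF holo_on_pderiv_p[OF assms(1) hw] that])
    finally show ?thesis
      unfolding Mop_def pderiv_p_cmult[OF hw that] by (simp add: algebra_simps)
  qed
  with assms(2) holo_on_cmult[OF hw] show ?thesis
    by (simp add: Sol_def)
qed

lemma Lop_cmult:
  "holo_on f \<Omega> \<Longrightarrow> x \<in> \<Omega> \<Longrightarrow> Lop i j \<beta> (\<lambda>y. c * f y) x = c * Lop i j \<beta> f x"
  by (simp add: Lop_def pderiv_p_cmult algebra_simps)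

lemma Lop_Lop_on_Sol:
  assumes "open \<Omega>" "\<Omega> \<subseteq> {x. \<forall>a b. a \<noteq> b \<longrightarrow> x $ a \<noteq> x $ b}" "i \<noteq> j" "u \<in> Sol \<Omega> \<beta>" "x \<in> \<Omega>"
  shows "Lop j i (\<beta> + axis i 1 - axis j 1) (Lop i j \<beta> u) x = (\<beta> $ i + 1) * \<beta> $ j * u x"
proof -
  have hu: "holo_on u \<Omega>"
    using assms(4) by (simp add: Sol_def)
  have "x $ i \<noteq> x $ j"
    using assms(2,3,5) by blast
  then have rel: "(x $ i - x $ j) * pderiv_p i (pderiv_p j u) x = \<beta> $ i * pderiv_p j u x - \<beta> $ j * pderiv_p i u x"
    by (rule Sol_second_derivative_relation[OF assms(4,3,5)])
  have "Lop j i (\<beta> + axis i 1 - axis j 1) (Lop i j \<beta> u) x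
      = (x $ j - x $ i) * (pderiv_p j u x + (x $ i - x $ j) * pderiv_p i (pderiv_p j u) x + \<beta> $ j * pderiv_p i u x)
        + (\<beta> $ i + 1) * ((x $ i - x $ j) * pderiv_p j u x + \<beta> $ j * u x)"
    using assms(3) by (simp add: Lop_def pderiv_p_Lop[OF assms(1) hu assms(5)] axis_def)
  also have "\<dots> = (\<beta> $ i + 1) * \<beta> $ j * u x"
    using rel by algebra
  finally show ?thesis .
qed

theorem mainTheorem2:
  fixes \<Omega> :: "(complex^'n) set" and \<alpha> :: "complex^'n" and i j :: 'n
  assumes "CARD('n) \<ge> 3"
    and "open \<Omega>" and "connected \<Omega>" and "simply_connected \<Omega>"
    and "\<Omega> \<subseteq> {x. \<forall>a b. a \<noteq> b \<longrightarrow> x $ a \<noteq> x $ b}"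
    and "i \<noteq> j"
  shows "(\<forall>u \<in> Sol \<Omega> \<alpha>. Lop i j \<alpha> u \<in> Sol \<Omega> (\<alpha> + axis i 1 - axis j 1))
    \<and> ((\<alpha> $ i + 1) * \<alpha> $ j \<noteq> 0 \<longrightarrow>
        (let \<alpha>' = \<alpha> + axis i 1 - axis j 1;
             Inv = (\<lambda>v x. 1 / ((\<alpha> $ i + 1) * \<alpha> $ j) * Lop j i \<alpha>' v x)
         in (\<forall>v \<in> Sol \<Omega> \<alpha>'. Inv v \<in> Sol \<Omega> \<alpha>)
          \<and> (\<forall>u \<in> Sol \<Omega> \<alpha>. \<forall>x\<in>\<Omega>. Inv (Lop i j \<alpha> u) x = u x)
          \<and> (\<forall>v \<in> Sol \<Omega> \<alpha>'. \<forall>x\<in>\<Omega>. Lop i j \<alpha> (Inv v) x = v x)))"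
proof -
  note open_distinct = assms(2,5)
  define \<alpha>' where "\<alpha>' = \<alpha> + axis i 1 - axis j 1"
  define \<kappa> where "\<kappa> = 1 / ((\<alpha> $ i + 1) * \<alpha> $ j)"
  have \<alpha>_back: "\<alpha>' + axis j 1 - axis i 1 = \<alpha>"
    by (simp add: \<alpha>'_def)
  have \<alpha>'_ij: "(\<alpha>' $ j + 1) * \<alpha>' $ i = (\<alpha> $ i + 1) * \<alpha> $ j"
    using assms(6) by (simp add: \<alpha>'_def axis_def algebra_simps)
  have Lop_back: "Lop j i \<alpha>' v \<in> Sol \<Omega> \<alpha>" if "v \<in> Sol \<Omega> \<alpha>'" for v
    using Lop_in_Sol[OF open_distinct assms(6)[symmetric] that] by (simp only: \<alpha>_back)
  have left_inverse: "\<kappa> * Lop j i \<alpha>' (Lop i j \<alpha> u) x = u x"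
    if "(\<alpha> $ i + 1) * \<alpha> $ j \<noteq> 0" "u \<in> Sol \<Omega> \<alpha>" "x \<in> \<Omega>" for u x
    using that Lop_Lop_on_Sol[OF open_distinct assms(6) that(2,3)] by (simp add: \<kappa>_def \<alpha>'_def)
  have right_inverse: "Lop i j \<alpha> (\<lambda>y. \<kappa> * Lop j i \<alpha>' v y) x = v x"
    if "(\<alpha> $ i + 1) * \<alpha> $ j \<noteq> 0" "v \<in> Sol \<Omega> \<alpha>'" "x \<in> \<Omega>" for v x
  proof -
    have "holo_on (Lop j i \<alpha>' v) \<Omega>"
      using that(2) assms(2) by (simp add: Sol_def holo_on_Lop)
    then have "Lop i j \<alpha> (\<lambda>y. \<kappa> * Lop j i \<alpha>' v y) x = \<kappa> * Lop i j \<alpha> (Lop j i \<alpha>' v) x"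
      by (rule Lop_cmult[OF _ that(3)])
    then show ?thesis
      using that Lop_Lop_on_Sol[OF open_distinct assms(6)[symmetric] that(2,3)]
      by (simp add: \<kappa>_def \<alpha>_back \<alpha>'_ij)
  qed
  show ?thesis
    unfolding Let_def \<alpha>'_def[symmetric] \<kappa>_def[symmetric]
    using Lop_in_Sol[OF open_distinct assms(6)] Sol_cmult[OF assms(2) Lop_back] left_inverse right_inverse
    by (simp add: \<alpha>'_def)
qed

end
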